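(* Let $k>0$, let $n$ be a positive integer, $p$ a prime with $p\ge 9n^{2k+2}$, $N$ a positive integer, $T=(n-1)(n-2)/2+2(n-1)$, $v_1,v_2,K,M\in\mathbb{Z}_p^T$, and $D(x)=(2-x)v_1+(x-1)v_2+(x-1)(x-2)(K+xM)$. Let $\mathcal A:\mathbb{Z}_p^T\to\mathbb{Z}_p$ be any function with success probability $q=\mathbb{P}(\mathcal A(\mathbf U)=Z_{n-1}(\mathbf U;p))$ ($\mathbf U$ uniform on $\mathbb{Z}_p^T$) satisfying $q\ge 1/n^k$. Let $\mathcal S=\{(x,\mathcal A(D(x))):x=3,4,\dots,p\}$ and, for $f\in\mathbb{Z}_p[x]$, $G(f)=\{(x,f(x)):x=1,\dots,p\}$. Define $$\mathcal F=\{f\in\mathbb{Z}_p[x]:\deg(f)<n^2,\ |G(f)\cap\mathcal S|\ge (p-2)q/2\}.$$ Then $|\mathcal F|\le 3/q$; in particular $|\mathcal F|\le 3n^k$.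
   Context: Arithmetic is in $\mathbb{Z}_p$, elements of $\{1,\dots,p\}$ viewed as residues mod $p$. For $\boldsymbol\sigma\in\{-1,1\}^m$, $I_m(\boldsymbol\sigma)=|\{(i,j):1\le i<j\le m,\ \sigma_i\ne\sigma_j\}|$, $f(m,\boldsymbol\sigma)=\frac{m(m-1)}2-m-I_m(\boldsymbol\sigma)$; a vector in $\mathbb{Z}_p^{m(m-1)/2+2m}$ is read as $(\mathbf J,\mathbf B,\mathbf C)$ with $J_{ij}$ ($1\le i<j\le m$), $B_i$, $C_i$ ($i\le m$), and $Z_m(\mathbf J,\mathbf B,\mathbf C;p)=\sum_{\boldsymbol\sigma}2^{Nf(m,\boldsymbol\sigma)}\prod_{i:\sigma_i=-1}B_i\prod_{i:\sigma_i=+1}C_i\prod_{i<j:\sigma_i\ne\sigma_j}J_{ij}\pmod p$. *)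

theory Defs
  imports "HOL-Analysis.Analysis" "Berlekamp_Zassenhaus.Finite_Field"
begin

text \<open>Arithmetic in Z_p is modelled by the type 'p mod_ring with 'p :: prime_card,
  so p = CARD('p) is prime. A vector in Z_p^(m(m-1)/2+2m) is a triple (J,B,C)
  of coordinate functions, J i j for 1 <= i < j <= m, B i and C i for 1 <= i <= m,
  extended by 0 outside these index ranges.\<close>

type_synonym 'a vec3 = "(nat \<Rightarrow> nat \<Rightarrow> 'a) \<times> (nat \<Rightarrow> 'a) \<times> (nat \<Rightarrow> 'a)"

definition vecs :: "nat \<Rightarrow> ('a::zero) vec3 set" where
  "vecs m = {(J,B,C). (\<forall>i j. \<not>(1 \<le> i \<and> i < j \<and> j \<le> m) \<longrightarrow> J i j = 0)
                    \<and> (\<forall>i. \<not>(1 \<le> i \<and> i \<le> m) \<longrightarrow> B i = 0)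
                    \<and> (\<forall>i. \<not>(1 \<le> i \<and> i \<le> m) \<longrightarrow> C i = 0)}"

definition vadd :: "('a::plus) vec3 \<Rightarrow> 'a vec3 \<Rightarrow> 'a vec3" where
  "vadd u w = (case u of (J,B,C) \<Rightarrow> case w of (J',B',C') \<Rightarrow>
      (\<lambda>i j. J i j + J' i j, \<lambda>i. B i + B' i, \<lambda>i. C i + C' i))"

definition vscale :: "('a::times) \<Rightarrow> 'a vec3 \<Rightarrow> 'a vec3" where
  "vscale c u = (case u of (J,B,C) \<Rightarrow> (\<lambda>i j. c * J i j, \<lambda>i. c * B i, \<lambda>i. c * C i))"

definition Dcurve :: "('a::comm_ring_1) vec3 \<Rightarrow> 'a vec3 \<Rightarrow> 'a vec3 \<Rightarrow> 'a vec3 \<Rightarrow> 'a \<Rightarrow> 'a vec3" where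
  "Dcurve v1 v2 K M x = vadd (vadd (vscale (2 - x) v1) (vscale (x - 1) v2))
               (vscale ((x - 1) * (x - 2)) (vadd K (vscale x M)))"

definition Inv :: "nat \<Rightarrow> (nat \<Rightarrow> int) \<Rightarrow> nat" where
  "Inv m \<sigma> = card {(i,j). 1 \<le> i \<and> i < j \<and> j \<le> m \<and> \<sigma> i \<noteq> \<sigma> j}"

definition fexp :: "nat \<Rightarrow> (nat \<Rightarrow> int) \<Rightarrow> int" where
  "fexp m \<sigma> = int (m * (m - 1) div 2) - int m - int (Inv m \<sigma>)"

definition Zpart :: "nat \<Rightarrow> nat \<Rightarrow> ('a::field) vec3 \<Rightarrow> 'a" where
  "Zpart N m U = (case U of (J,B,C) \<Rightarrow>
     (\<Sum>\<sigma>\<in>PiE {1..m} (\<lambda>_. {-1, 1}).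
        (2::'a) powi (int N * fexp m \<sigma>)
        * (\<Prod>i\<in>{i\<in>{1..m}. \<sigma> i = -1}. B i)
        * (\<Prod>i\<in>{i\<in>{1..m}. \<sigma> i = 1}. C i)
        * (\<Prod>(i,j)\<in>{(i,j). 1 \<le> i \<and> i < j \<and> j \<le> m \<and> \<sigma> i \<noteq> \<sigma> j}. J i j)))"

end

theory Submission
  imports Defs
begin

text \<open>Two distinct polynomials of degree below \<open>n\<^sup>2\<close>
  agree in at most \<open>d = n\<^sup>2 - 1\<close> points, so the sets \<open>G(f) \<inter> \<S>\<close>, \<open>f \<in> \<F>\<close>, overlap pairwise
  in at most \<open>d\<close> points. If \<open>L > 3/q\<close> of them each had at least \<open>P q/2\<close> points, where
  \<open>P = p - 2 \<ge> |\<S>|\<close>, inclusion-exclusion truncated after the pairwise terms would give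
  \<open>L P q/2 \<le> P + d L (L - 1)/2\<close>; taking \<open>L = \<lfloor>3/q\<rfloor> + 1\<close>, this contradicts \<open>q\<^sup>2 P \<ge> 9 d\<close>,
  which is what the hypotheses \<open>p \<ge> 9 n\<^bsup>2k+2\<^esup>\<close> and \<open>q \<ge> n\<^bsup>-k\<^esup>\<close> provide.\<close>

lemma sum_card_le_card_UN_pairwise_inter:
  fixes X :: "'i \<Rightarrow> 'a set"
  assumes "finite I" "\<And>i. i \<in> I \<Longrightarrow> finite (X i)"
    and "\<And>i j. i \<in> I \<Longrightarrow> j \<in> I \<Longrightarrow> i \<noteq> j \<Longrightarrow> card (X i \<inter> X j) \<le> c"
  shows "2 * (\<Sum>i\<in>I. card (X i)) \<le> 2 * card (\<Union>i\<in>I. X i) + c * card I * (card I - 1)"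
  using assms
proof (induction I rule: finite_induct)
  case empty
  then show ?case by simp
next
  case (insert a I)
  let ?U = "\<Union>i\<in>I. X i"
  have IH: "2 * (\<Sum>i\<in>I. card (X i)) \<le> 2 * card ?U + c * card I * (card I - 1)"
    by (rule insert.IH) (simp_all add: insert.prems)
  have fin: "finite (X a)" "finite ?U"
    using insert.hyps(1) by (simp_all add: insert.prems)
  have Un_Int: "card (X a \<union> ?U) + card (X a \<inter> ?U) = card (X a) + card ?U"
    using card_Un_Int[OF fin] by linarith
  have "card (X a \<inter> ?U) = card (\<Union>i\<in>I. X a \<inter> X i)"
    by (simp only: Int_UN_distrib)
  also have "\<dots> \<le> (\<Sum>i\<in>I. card (X a \<inter> X i))"
    using insert.hyps(1) by (rule card_UN_le)
  also have "\<dots> \<le> (\<Sum>i\<in>I. c)"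
    using insert.hyps(2) by (intro sum_mono insert.prems(2)) auto
  finally have Int_le: "card (X a \<inter> ?U) \<le> c * card I"
    by (simp add: mult.commute)
  have "2 * (\<Sum>i\<in>insert a I. card (X i)) = 2 * card (X a) + 2 * (\<Sum>i\<in>I. card (X i))"
    using insert.hyps by simp
  also have "\<dots> \<le> 2 * card (X a \<union> ?U) + 2 * card (X a \<inter> ?U) + c * card I * (card I - 1)"
    using IH Un_Int by linarith
  also have "\<dots> \<le> 2 * card (X a \<union> ?U) + c * card I * (card I - 1) + 2 * (c * card I)"
    using Int_le by linarith
  also have "\<dots> = 2 * card (\<Union>i\<in>insert a I. X i) + c * card (insert a I) * (card (insert a I) - 1)"
    using insert.hyps by (cases "card I") (simp_all add: algebra_simps)
  finally show ?case .
qed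

lemma card_le_of_pairwise_small_inter:
  fixes X :: "'i \<Rightarrow> 'a set" and q P :: real and d :: nat
  assumes "q > 0" "P > 0" "q\<^sup>2 * P \<ge> 9 * real d"
    and "finite S" "real (card S) \<le> P"
    and "\<And>i. i \<in> F \<Longrightarrow> X i \<subseteq> S"
    and "\<And>i. i \<in> F \<Longrightarrow> real (card (X i)) \<ge> P * q / 2"
    and "\<And>i j. i \<in> F \<Longrightarrow> j \<in> F \<Longrightarrow> i \<noteq> j \<Longrightarrow> card (X i \<inter> X j) \<le> d"
  shows "real (card F) \<le> 3 / q"
proof (rule ccontr)
  assume "\<not> ?thesis"
  define L where "L = nat \<lfloor>3 / q\<rfloor> + 1"
  have "real L = of_int \<lfloor>3 / q\<rfloor> + 1"
    using \<open>q > 0\<close> by (simp add: L_def)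
  then have L_gt: "real L > 3 / q" and L_le: "real L - 1 \<le> 3 / q"
    using floor_correct[of "3 / q"] by linarith+
  with \<open>\<not> ?thesis\<close> have "L \<le> card F" by linarith
  then obtain T where T: "T \<subseteq> F" "card T = L" "finite T"
    by (rule obtain_subset_with_card_n)
  have "2 * (\<Sum>i\<in>T. card (X i)) \<le> 2 * card (\<Union>i\<in>T. X i) + d * L * (L - 1)"
    using sum_card_le_card_UN_pairwise_inter[of T X d] T assms(4,6,8)
    by (metis finite_subset subsetD)
  also have "card (\<Union>i\<in>T. X i) \<le> card S"
    using T assms(4,6) by (intro card_mono) auto
  finally have "real (2 * (\<Sum>i\<in>T. card (X i))) \<le> real (2 * card S + d * L * (L - 1))"
    by (simp only: of_nat_le_iff)
  then have "2 * (\<Sum>i\<in>T. real (card (X i))) \<le> 2 * P + d * real L * (real L - 1)"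
    using \<open>real (card S) \<le> P\<close> by (simp add: L_def of_nat_diff algebra_simps)
  moreover have "real L * (P * q / 2) \<le> (\<Sum>i\<in>T. real (card (X i)))"
    using sum_mono[of T "\<lambda>_. P * q / 2" "\<lambda>i. real (card (X i))"] T assms(7) by auto
  ultimately have double_count: "real L * q * P \<le> 2 * P + d * real L * (real L - 1)"
    by (simp add: algebra_simps)
  have "real d * (real L - 1) \<le> real d * (3 / q)"
    using L_le by (intro mult_left_mono) auto
  also have "\<dots> \<le> q * P / 3"
    using assms(1,3) by (simp add: field_simps power2_eq_square)
  finally have "real L * (real d * (real L - 1)) \<le> real L * (q * P / 3)"
    by (rule mult_left_mono) simp
  with double_count have "P * (real L * q) \<le> P * 3"
    by (simp add: algebra_simps)
  then have "real L * q \<le> 3"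
    using \<open>P > 0\<close> by simp
  with L_gt \<open>q > 0\<close> show False
    by (simp add: field_simps)
qed

lemma card_poly_graph_inter_le:
  fixes f g :: "'a::field poly"
  assumes "f \<noteq> g" "degree f < d" "degree g < d"
  shows "card ({(a, poly f a) | a. a \<in> Q} \<inter> {(a, poly g a) | a. a \<in> Q}) \<le> d - 1"
proof -
  have "f - g \<noteq> 0"
    using assms by simp
  have "{(a, poly f a) | a. a \<in> Q} \<inter> {(a, poly g a) | a. a \<in> Q}
        \<subseteq> (\<lambda>a. (a, poly f a)) ` {x. poly (f - g) x = 0}"
    by auto
  then have "card ({(a, poly f a) | a. a \<in> Q} \<inter> {(a, poly g a) | a. a \<in> Q})
        \<le> card ((\<lambda>a. (a, poly f a)) ` {x. poly (f - g) x = 0})"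
    using \<open>f - g \<noteq> 0\<close> by (intro card_mono finite_imageI poly_roots_finite)
  also have "\<dots> \<le> card {x. poly (f - g) x = 0}"
    using \<open>f - g \<noteq> 0\<close> by (intro card_image_le poly_roots_finite)
  also have "\<dots> \<le> degree (f - g)"
    using \<open>f - g \<noteq> 0\<close> by (rule card_poly_roots_bound)
  also have "\<dots> \<le> d - 1"
    using degree_diff_le_max[of f g] assms by linarith
  finally show ?thesis .
qed

lemma list_size_condition_of_powr_bounds:
  fixes k q :: real and n c :: nat
  assumes "k \<ge> 0" "n > 0" "real c \<ge> 9 * real n powr (2 * k + 2)" "q \<ge> 1 / real n powr k"
  shows "c > 2" "q\<^sup>2 * real (c - 2) \<ge> 9 * real (n\<^sup>2 - 1)"
proof -
  define x where "x = real n powr k"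
  have "x \<ge> 1" "(real n)\<^sup>2 \<ge> 1"
    using assms(1,2) by (simp_all add: x_def ge_one_powr_ge_zero)
  have "2 * k + 2 = (k + k) + (2::real)" and "real n powr 2 = (real n)\<^sup>2"
    using assms(2) by (simp_all add: powr_numeral)
  then have "real n powr (2 * k + 2) = x\<^sup>2 * (real n)\<^sup>2"
    unfolding x_def by (simp only: powr_add power2_eq_square)
  then have c_ge: "real c \<ge> 9 * x\<^sup>2 * (real n)\<^sup>2"
    using assms(3) by simp
  moreover have "x\<^sup>2 * (real n)\<^sup>2 \<ge> 1"
    using \<open>x \<ge> 1\<close> \<open>(real n)\<^sup>2 \<ge> 1\<close> mult_mono[of 1 "x\<^sup>2" 1 "(real n)\<^sup>2"]
    by simp
  ultimately have "real c \<ge> 9"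
    by linarith
  then show "c > 2"
    by simp
  then have c_eq: "real (c - 2) = real c - 2"
    by (simp add: of_nat_diff)
  have q_sq: "q\<^sup>2 \<ge> 1 / x\<^sup>2"
    using power_mono[OF assms(4), of 2] \<open>x \<ge> 1\<close> by (simp add: x_def power_divide)
  have "q\<^sup>2 * (real c - 2) \<ge> (real c - 2) / x\<^sup>2"
    using mult_right_mono[OF q_sq, of "real c - 2"] \<open>real c \<ge> 9\<close> by simp
  also have "(real c - 2) / x\<^sup>2 \<ge> 9 * (real n)\<^sup>2 - 2 / x\<^sup>2"
    using \<open>x \<ge> 1\<close> c_ge by (simp add: diff_divide_distrib pos_le_divide_eq mult_ac)
  moreover have "2 / x\<^sup>2 \<le> 2"
    using \<open>x \<ge> 1\<close> by (simp add: divide_le_eq)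
  ultimately show "q\<^sup>2 * real (c - 2) \<ge> 9 * real (n\<^sup>2 - 1)"
    using assms(2) unfolding c_eq by simp
qed

theorem lemma4:
  fixes k :: real and n N :: nat
    and v1 v2 K M :: "('p::prime_card mod_ring) vec3"
    and A :: "'p mod_ring vec3 \<Rightarrow> 'p mod_ring"
  assumes "k > 0" and "n > 0" and "N > 0"
    and "real CARD('p) \<ge> 9 * real n powr (2 * k + 2)"
    and "v1 \<in> vecs (n - 1)" "v2 \<in> vecs (n - 1)" "K \<in> vecs (n - 1)" "M \<in> vecs (n - 1)"
  defines "q \<equiv> real (card {U \<in> vecs (n - 1). A U = Zpart N (n - 1) U}) / real CARD('p) ^ ((n - 1) * (n - 2) div 2 + 2 * (n - 1))"
    and "S \<equiv> {(of_nat x :: 'p mod_ring, A (Dcurve v1 v2 K M (of_nat x))) | x. 3 \<le> x \<and> x \<le> CARD('p)}"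
    and "G \<equiv> (\<lambda>f::'p mod_ring poly. {(of_nat x :: 'p mod_ring, poly f (of_nat x)) | x. 1 \<le> x \<and> x \<le> CARD('p)})"
  assumes "q \<ge> 1 / real n powr k"
  shows "card {f::'p mod_ring poly. degree f < n^2 \<and> real (card (G f \<inter> S)) \<ge> real (CARD('p) - 2) * q / 2}
           \<le> 3 / q
       \<and> card {f::'p mod_ring poly. degree f < n^2 \<and> real (card (G f \<inter> S)) \<ge> real (CARD('p) - 2) * q / 2}
           \<le> 3 * real n powr k"
proof -
  let ?F = "{f::'p mod_ring poly. degree f < n^2 \<and> real (card (G f \<inter> S)) \<ge> real (CARD('p) - 2) * q / 2}"
  have q_pos: "q > 0"
    using assms(2) by (intro less_le_trans[OF _ assms(12)]) simp
  have "CARD('p) > 2" and list_size_condition: "q\<^sup>2 * real (CARD('p) - 2) \<ge> 9 * real (n\<^sup>2 - 1)"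
    using list_size_condition_of_powr_bounds[OF _ assms(2,4,12)] assms(1) by simp_all
  then have P_pos: "real (CARD('p) - 2) > 0"
    by simp
  have "S = (\<lambda>x. (of_nat x, A (Dcurve v1 v2 K M (of_nat x)))) ` {3..CARD('p)}"
    unfolding S_def by auto
  then have card_S: "real (card S) \<le> real (CARD('p) - 2)"
    using card_image_le[of "{3..CARD('p)}"] by simp
  have G_eq: "G h = {(a, poly h a) | a. a \<in> of_nat ` {1..CARD('p)}}" for h
    unfolding G_def by auto
  have pairwise: "card ((G f \<inter> S) \<inter> (G g \<inter> S)) \<le> n\<^sup>2 - 1"
    if "f \<in> ?F" "g \<in> ?F" "f \<noteq> g" for f g
  proof -
    have "card ((G f \<inter> S) \<inter> (G g \<inter> S)) \<le> card (G f \<inter> G g)"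
      by (intro card_mono) auto
    also have "\<dots> \<le> n\<^sup>2 - 1"
      unfolding G_eq using that by (intro card_poly_graph_inter_le) auto
    finally show ?thesis .
  qed
  have F_le: "real (card ?F) \<le> 3 / q"
  proof (rule card_le_of_pairwise_small_inter[where X="\<lambda>f. G f \<inter> S"])
    show "G f \<inter> S \<subseteq> S" for f
      by blast
    show "real (CARD('p) - 2) * q / 2 \<le> real (card (G f \<inter> S))" if "f \<in> ?F" for f
      using that by simp
  qed (fact q_pos P_pos list_size_condition finite card_S pairwise)+
  have "1 \<le> q * real n powr k"
    using assms(2,12) by (simp add: divide_le_eq mult.commute)
  then have "3 / q \<le> 3 * real n powr k"
    using q_pos by (simp add: field_simps)
  with F_le show ?thesis
    by linarith
qed

end
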